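(* Let $\alpha$ be a composition of $n$ and let $D=S_{\omega(\alpha)}\subseteq[n-1]$. Then for each $i\ge 0$, $$\hat L_\alpha^{(i)}=\sum_{E\subseteq[n+i-1]}|T(D,E)|\,L_{\omega(\mathcal C(E))}.$$
   Context: For a composition $\alpha=(\alpha_1,\dots,\alpha_k)$ of $n$, $S_\alpha=\{\alpha_1,\alpha_1+\alpha_2,\dots,\alpha_1+\dots+\alpha_{k-1}\}\subseteq[n-1]$; for $E=\{e_1<\dots<e_k\}\subseteq[m-1]$, $\mathcal C(E)=(e_1,e_2-e_1,\dots,m-e_k)$, a composition of $m$. $\mathrm{rev}(\alpha)=(\alpha_k,\dots,\alpha_1)$ and $\omega(\alpha)$ is the composition of $n$ with $S_{\omega(\alpha)}=[n-1]\setminus S_{\mathrm{rev}(\alpha)}$. $L_\beta$ is the fundamental quasisymmetric function: for $\beta$ a composition of $m$, $L_\beta=\sum x_{i_1}\cdots x_{i_m}$ over $i_1\le\dots\le i_m$ with $i_j<i_{j+1}$ whenever $j\in S_\beta$. $\hat L_\alpha=\sum x^\sigma$, summed over all sequences $(\sigma_1,\dots,\sigma_n)$ of nonempty finite multisets of positive integers with $\max\sigma_j\le\min\sigma_{j+1}$ for all $j$ and $\max\sigma_j<\min\sigma_{j+1}$ when $j\in S_\alpha$, where $x^\sigma=\prod_r x_r^{(\text{total multiplicity of } r \text{ in } \sigma_1,\dots,\sigma_n)}$. $\hat L_\alpha^{(i)}$ denotes the homogeneous component of $\hat L_\alpha$ of degree $n+i$. For $D\subseteq[n-1]$ and $E\subseteq[n+i-1]$,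 an $i$-extension of $D$ to $E$ is an injective order-preserving map $t:[n-1]\to[n+i-1]$ with $t(D)\subseteq E$ and $E\setminus t(D)=[n+i-1]\setminus t([n-1])$; $T(D,E)$ is the set of $i$-extensions of $D$ to $E$. *)

theory Defs
  imports Main "HOL-Library.Multiset" "HOL-Library.FuncSet"
begin

text \<open>Monomials in the variables
x_1, x_2, ... are represented by multisets of positive naturals (the multiset of
variable indices, with multiplicity = exponent). A (homogeneous component of a)
formal power series is represented by its coefficient function on monomials.\<close>

definition is_composition :: "nat list \<Rightarrow> bool" where
  "is_composition \<alpha> \<longleftrightarrow> (\<forall>a \<in> set \<alpha>. 0 < a)"

definition Sset :: "nat list \<Rightarrow> nat set" where
  "Sset \<alpha> = {sum_list (take k \<alpha>) | k. 1 \<le> k \<and> k < length \<alpha>}"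

definition Ccomp :: "nat \<Rightarrow> nat set \<Rightarrow> nat list" where
  "Ccomp m E = (let ps = 0 # sorted_list_of_set E @ [m]
                in map (\<lambda>k. ps ! (k+1) - ps ! k) [0..<card E + 1])"

definition omega :: "nat list \<Rightarrow> nat list" where
  "omega \<alpha> = Ccomp (sum_list \<alpha>) ({1..sum_list \<alpha> - 1} - Sset (rev \<alpha>))"

text \<open>Coefficient of the monomial M in the fundamental quasisymmetric function L_beta.
Sequences (i_1,...,i_m) are lists; position j (1-based) corresponds to index j-1.\<close>
definition Lcoeff :: "nat list \<Rightarrow> nat multiset \<Rightarrow> nat" where
  "Lcoeff \<beta> M = card {is :: nat list.
      length is = sum_list \<beta> \<and> (\<forall>x \<in> set is. 0 < x) \<and>
      (\<forall>j. 1 \<le> j \<and> j < sum_list \<beta> \<longrightarrow>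
         is ! (j-1) \<le> is ! j \<and> (j \<in> Sset \<beta> \<longrightarrow> is ! (j-1) < is ! j)) \<and>
      mset is = M}"

text \<open>Coefficient of the monomial M in hat L_alpha^{(i)}, the homogeneous
component of degree n+i of hat L_alpha (n = |alpha|). Sequences
(sigma_1,...,sigma_n) of nonempty finite multisets are lists of length n;
x^sigma corresponds to the multiset sum of the sigma_j.\<close>
definition hatLcoeff :: "nat list \<Rightarrow> nat \<Rightarrow> nat multiset \<Rightarrow> nat" where
  "hatLcoeff \<alpha> i M =
     (if size M = sum_list \<alpha> + i then
        card {\<sigma> :: nat multiset list.
           length \<sigma> = sum_list \<alpha> \<and>
           (\<forall>s \<in> set \<sigma>. s \<noteq> {#} \<and> (\<forall>x \<in># s. 0 < x)) \<and>
           (\<forall>j. 1 \<le> j \<and> j < sum_list \<alpha> \<longrightarrow>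
              Max (set_mset (\<sigma> ! (j-1))) \<le> Min (set_mset (\<sigma> ! j)) \<and>
              (j \<in> Sset \<alpha> \<longrightarrow> Max (set_mset (\<sigma> ! (j-1))) < Min (set_mset (\<sigma> ! j)))) \<and>
           sum_list \<sigma> = M}
      else 0)"

text \<open>T(D,E): i-extensions of D \<subseteq> [n-1] to E \<subseteq> [n+i-1]; maps are
represented as extensional functions on [n-1].\<close>
definition Text :: "nat \<Rightarrow> nat \<Rightarrow> nat set \<Rightarrow> nat set \<Rightarrow> (nat \<Rightarrow> nat) set" where
  "Text n i D E = {t. t \<in> {1..n-1} \<rightarrow>\<^sub>E {1..n+i-1} \<and>
      strict_mono_on {1..n-1} t \<and> t ` D \<subseteq> E \<and>
      E - t ` D = {1..n+i-1} - t ` {1..n-1}}"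

end

theory Submission
  imports Defs
begin

text \<open>
  Fix a monomial M of degree N = n + i (all other coefficients vanish on both sides) and let w be
  its weakly increasing word. A sequence \<sigma> counted by hat L_\<alpha> consists of consecutive
  blocks of w, cut at the partial sizes p(j) = |\<sigma>_1| + ... + |\<sigma>_j|; this is a strictly
  increasing map p : [n-1] \<rightarrow> [N-1], and the order conditions on \<sigma> say precisely that w
  strictly ascends at p(j) for every j \<in> S_\<alpha>. Dually, L_\<beta> has coefficient 1 at M iff w
  ascends at every position of S_\<beta>, and 0 otherwise.

  Every strictly increasing t : [n-1] \<rightarrow> [N-1] is an i-extension of D to exactly one set,
  E_t = t(D) \<union> ([N-1] - t([n-1])), and for \<beta> = \<omega>(C(E_t)) the positions of S_\<beta> are the
  N - t(k) with n - k \<in> S_\<alpha>. So both sides count increasing maps with an ascent condition,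
  and the reflection t \<mapsto> (j \<mapsto> N - t(n - j)) matches the two conditions.
\<close>

lemma telescope_sum_list_nat:
  fixes f :: "nat \<Rightarrow> nat"
  assumes "\<And>j. j < k \<Longrightarrow> f j \<le> f (Suc j)"
  shows "f 0 + (\<Sum>j\<leftarrow>[0..<k]. f (Suc j) - f j) = f k"
  using assms
proof (induction k)
  case (Suc k)
  have "f k \<le> f (Suc k)" and "f 0 + (\<Sum>j\<leftarrow>[0..<k]. f (Suc j) - f j) = f k"
    using Suc by simp_all
  then show ?case
    by (simp only: upt_Suc_append[OF le0] map_append sum_list_append) simp
qed simp

lemma Min_set_sorted: "sorted xs \<Longrightarrow> xs \<noteq> [] \<Longrightarrow> Min (set xs) = hd xs"
  by (cases xs) (auto intro!: Min_eqI)

lemma Max_set_sorted: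
  assumes "sorted xs" and "xs \<noteq> []"
  shows "Max (set xs) = last xs"
proof (rule Max_eqI)
  show "y \<le> last xs" if "y \<in> set xs" for y
    using assms that by (auto simp: in_set_conv_nth last_conv_nth sorted_iff_nth_mono)
qed (use assms in simp_all)

lemma sorted_concat:
  assumes "\<forall>xs\<in>set xss. sorted xs \<and> xs \<noteq> []"
    and "\<forall>j. Suc j < length xss \<longrightarrow> (\<forall>x\<in>set (xss ! j). \<forall>y\<in>set (xss ! Suc j). x \<le> y)"
  shows "sorted (concat xss)"
  using assms
proof (induction xss)
  case (Cons xs xss)
  have IH: "sorted (concat xss)"
    using Cons.IH Cons.prems by fastforce
  show ?case
  proof (cases xss)
    case (Cons ys yss)
    have ys: "ys \<noteq> []" "sorted ys" using Cons Cons.prems(1) by auto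
    have "\<forall>x\<in>set xs. x \<le> hd ys"
      using Cons.prems(2)[rule_format, of 0] ys Cons by (simp add: hd_in_set)
    moreover have "\<forall>y\<in>set (concat xss). hd ys \<le> y"
      using IH ys Cons by (cases ys) auto
    ultimately show ?thesis
      using IH Cons.prems(1) by (auto simp: sorted_append intro: order.trans)
  qed (use Cons.prems in simp)
qed simp

lemma drop_concat_sum_lengths:
  "j \<le> length xss \<Longrightarrow> drop (\<Sum>xs\<leftarrow>take j xss. length xs) (concat xss) = concat (drop j xss)"
proof (induction xss arbitrary: j)
  case (Cons xs xss)
  then show ?case by (cases j) auto
qed simp

definition slice :: "nat \<Rightarrow> nat \<Rightarrow> 'a list \<Rightarrow> 'a list" where
  "slice a b w = take (b - a) (drop a w)"

lemma length_slice: "b \<le> length w \<Longrightarrow> length (slice a b w) = b - a"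
  by (simp add: slice_def)

lemma set_slice_subset: "set (slice a b w) \<subseteq> set w"
  by (auto simp: slice_def dest: in_set_takeD in_set_dropD)

lemma sorted_slice: "sorted w \<Longrightarrow> sorted (slice a b w)"
  by (simp add: slice_def sorted_wrt_take sorted_wrt_drop)

lemma Min_set_slice:
  assumes "sorted w" and "a < b" and "b \<le> length w"
  shows "Min (set (slice a b w)) = w ! a"
  using assms by (subst Min_set_sorted) (auto simp: sorted_slice slice_def hd_drop_conv_nth)

lemma Max_set_slice:
  assumes "sorted w" and "a < b" and "b \<le> length w"
  shows "Max (set (slice a b w)) = w ! (b - 1)"
  using assms by (subst Max_set_sorted) (auto simp: sorted_slice slice_def last_conv_nth)

lemma concat_slices:
  assumes "\<And>j. j < k \<Longrightarrow> q j \<le> q (Suc j)" and "q 0 = 0"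
  shows "concat (map (\<lambda>j. slice (q j) (q (Suc j)) w) [0..<k]) = take (q k) w"
  using assms
proof (induction k)
  case (Suc k)
  have "take (q (Suc k)) w = take (q k + (q (Suc k) - q k)) w"
    using Suc.prems by simp
  also have "\<dots> = take (q k) w @ slice (q k) (q (Suc k)) w"
    by (simp only: take_add slice_def)
  finally show ?case using Suc by simp
qed simp

lemma slice_concat_nth:
  assumes "j < length xss"
  shows "slice (\<Sum>xs\<leftarrow>take j xss. length xs) (\<Sum>xs\<leftarrow>take (Suc j) xss. length xs) (concat xss) = xss ! j"
proof -
  have "drop (\<Sum>xs\<leftarrow>take j xss. length xs) (concat xss) = xss ! j @ concat (drop (Suc j) xss)"
    using assms by (simp add: drop_concat_sum_lengths Cons_nth_drop_Suc[symmetric])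
  then show ?thesis
    using assms by (simp add: slice_def take_Suc_conv_app_nth)
qed

section \<open>Compositions, C(E) and \<omega>\<close>

lemma sum_list_take_rev:
  fixes xs :: "nat list"
  assumes "k \<le> length xs"
  shows "sum_list (take k (rev xs)) = sum_list xs - sum_list (take (length xs - k) xs)"
proof -
  have "take k (rev xs) = rev (drop (length xs - k) xs)"
    using assms by (simp add: take_rev)
  moreover have "sum_list xs = sum_list (take (length xs - k) xs) + sum_list (drop (length xs - k) xs)"
    by (metis append_take_drop_id sum_list_append)
  ultimately show ?thesis by simp
qed

lemma Sset_rev: "Sset (rev xs) = (\<lambda>s. sum_list xs - s) ` Sset xs"
proof (intro equalityI subsetI)
  fix x assume "x \<in> Sset (rev xs)"
  then obtain k where k: "1 \<le> k" "k < length xs" "x = sum_list (take k (rev xs))"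
    by (auto simp: Sset_def)
  then have "x = sum_list xs - sum_list (take (length xs - k) xs)"
    by (simp add: sum_list_take_rev)
  moreover have "sum_list (take (length xs - k) xs) \<in> Sset xs"
    unfolding Sset_def using k by (intro CollectI exI[of _ "length xs - k"]) auto
  ultimately show "x \<in> (\<lambda>s. sum_list xs - s) ` Sset xs" by blast
next
  fix x assume "x \<in> (\<lambda>s. sum_list xs - s) ` Sset xs"
  then obtain k where k: "1 \<le> k" "k < length xs" "x = sum_list xs - sum_list (take k xs)"
    by (auto simp: Sset_def)
  then have "x = sum_list (take (length xs - k) (rev xs))"
    by (simp add: sum_list_take_rev)
  then show "x \<in> Sset (rev xs)"
    unfolding Sset_def using k by (intro CollectI exI[of _ "length xs - k"]) auto
qed

lemma Sset_subset:
  assumes "is_composition xs"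
  shows "Sset xs \<subseteq> {1..sum_list xs - 1}"
proof
  fix x assume "x \<in> Sset xs"
  then obtain k where k: "1 \<le> k" "k < length xs" "x = sum_list (take k xs)"
    by (auto simp: Sset_def)
  have "xs ! 0 \<in> set (take k xs)" and "xs ! k \<in> set (drop k xs)"
    using k by (auto simp: in_set_conv_nth intro!: exI[of _ 0])
  moreover have "xs ! 0 \<in> set xs" and "xs ! k \<in> set xs"
    using k by (auto intro: nth_mem)
  then have "0 < xs ! 0" and "0 < xs ! k"
    using assms by (simp_all add: is_composition_def)
  ultimately have "0 < x" and "0 < sum_list (drop k xs)"
    using k(3) member_le_sum_list[of "xs ! 0" "take k xs"] member_le_sum_list[of "xs ! k" "drop k xs"]
    by simp_all
  moreover have "sum_list xs = x + sum_list (drop k xs)"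
    using k(3) by (metis append_take_drop_id sum_list_append)
  ultimately show "x \<in> {1..sum_list xs - 1}" by simp
qed

lemma all_in_range_iff_ball:
  fixes m :: nat
  assumes "A \<subseteq> {1..m-1}"
  shows "(\<forall>j. 1 \<le> j \<and> j < m \<and> j \<in> A \<longrightarrow> P j) \<longleftrightarrow> (\<forall>j\<in>A. P j)"
proof -
  have "1 \<le> j \<and> j < m" if "j \<in> A" for j
    using subsetD[OF assms that] by auto
  then show ?thesis
    by blast
qed

lemma
  assumes "E \<subseteq> {1..m-1}"
  shows sum_list_Ccomp: "sum_list (Ccomp m E) = m"
    and Sset_Ccomp: "Sset (Ccomp m E) = E"
proof -
  define xs where "xs = sorted_list_of_set E"
  define c where "c = card E"
  define ps where "ps = 0 # xs @ [m]"
  have fin: "finite E"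
    using assms finite_subset by blast
  have lxs: "length xs = c" and setxs: "set xs = E"
    using fin by (simp_all add: xs_def c_def)
  have "\<forall>x\<in>set xs. x \<le> m"
  proof
    fix x assume "x \<in> set xs"
    then have "x \<le> m - 1"
      using assms setxs by auto
    then show "x \<le> m" by simp
  qed
  then have "sorted ps"
    by (simp add: ps_def xs_def sorted_append)
  then have mono: "ps ! j \<le> ps ! Suc j" if "j < c + 1" for j
    using that lxs sorted_nth_mono[of ps j "Suc j"] by (simp add: ps_def)
  have C: "Ccomp m E = map (\<lambda>k. ps ! Suc k - ps ! k) [0..<c + 1]"
    by (simp add: Ccomp_def ps_def xs_def c_def Let_def)
  have prefix: "sum_list (take k (Ccomp m E)) = ps ! k" if "k \<le> c + 1" for k
    using that telescope_sum_list_nat[of k "\<lambda>j. ps ! j"] mono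
    by (simp add: C take_map ps_def del: upt_Suc)
  show "sum_list (Ccomp m E) = m"
    using prefix[of "c + 1"] by (simp add: C ps_def lxs nth_append)
  have ps_nth: "ps ! Suc j = xs ! j" if "j < c" for j
    using that lxs by (simp add: ps_def nth_append)
  show "Sset (Ccomp m E) = E"
  proof (intro equalityI subsetI)
    fix x assume "x \<in> Sset (Ccomp m E)"
    then obtain k where k: "1 \<le> k" "k < c + 1" "x = sum_list (take k (Ccomp m E))"
      by (auto simp: Sset_def C)
    then have "x = xs ! (k - 1)"
      using prefix ps_nth[of "k - 1"] by simp
    then show "x \<in> E"
      using k lxs setxs by auto
  next
    fix x assume "x \<in> E"
    then obtain j where j: "j < c" "x = xs ! j"
      using setxs lxs by (auto simp: in_set_conv_nth)
    then have "x = sum_list (take (Suc j) (Ccomp m E))"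
      using prefix ps_nth by simp
    then show "x \<in> Sset (Ccomp m E)"
      unfolding Sset_def using j by (intro CollectI exI[of _ "Suc j"]) (simp add: C)
  qed
qed

lemma sum_list_omega: "sum_list (omega xs) = sum_list xs"
  unfolding omega_def by (rule sum_list_Ccomp) blast

lemma Sset_omega: "Sset (omega xs) = {1..sum_list xs - 1} - (\<lambda>s. sum_list xs - s) ` Sset xs"
  unfolding omega_def by (subst Sset_Ccomp) (auto simp: Sset_rev)

section \<open>Coefficients of fundamental quasisymmetric functions\<close>

text \<open>Positions are 1-based: \<open>ascent w j\<close> says that the j-th letter of w is smaller than the (j+1)-st.\<close>

definition ascent :: "'a::linorder list \<Rightarrow> nat \<Rightarrow> bool" where
  "ascent w j \<longleftrightarrow> w ! (j - 1) < w ! j"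

lemma card_subset_singleton: "A \<subseteq> {a} \<Longrightarrow> card A = of_bool (a \<in> A)"
  by (auto simp: subset_singleton_iff)

lemma Lcoeff_eq:
  fixes M :: "nat multiset"
  assumes "\<forall>x\<in>#M. 0 < x"
  shows "Lcoeff \<beta> M = of_bool (size M = sum_list \<beta> \<and>
    (\<forall>j. 1 \<le> j \<and> j < sum_list \<beta> \<and> j \<in> Sset \<beta> \<longrightarrow> ascent (sorted_list_of_multiset M) j))"
    (is "_ = of_bool ?cond")
proof -
  define w where "w = sorted_list_of_multiset M"
  let ?S = "{is :: nat list. length is = sum_list \<beta> \<and> (\<forall>x \<in> set is. 0 < x) \<and>
      (\<forall>j. 1 \<le> j \<and> j < sum_list \<beta> \<longrightarrow>
         is ! (j-1) \<le> is ! j \<and> (j \<in> Sset \<beta> \<longrightarrow> is ! (j-1) < is ! j)) \<and>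
      mset is = M}"
  have w: "sorted w" "mset w = M" "length w = size M"
    unfolding w_def by (metis sorted_sorted_list_of_multiset mset_sorted_list_of_multiset size_mset)+
  have "?S \<subseteq> {w}"
  proof
    fix xs assume xs: "xs \<in> ?S"
    have "sorted xs"
      unfolding sorted_iff_nth_Suc
    proof (intro allI impI)
      fix k assume "Suc k < length xs"
      then show "xs ! k \<le> xs ! Suc k"
        using xs by (auto dest!: spec[of _ "Suc k"])
    qed
    with xs show "xs \<in> {w}"
      by (auto simp: w_def sorted_sort_id)
  qed
  moreover have "w \<in> ?S \<longleftrightarrow> ?cond"
  proof -
    have pos: "\<forall>x\<in>set w. 0 < x"
      using assms w(2) by auto
    have mono: "\<forall>j. 1 \<le> j \<and> j < length w \<longrightarrow> w ! (j - 1) \<le> w ! j"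
      using sorted_nth_mono[OF w(1)] by simp
    have "?cond \<longleftrightarrow> size M = sum_list \<beta> \<and>
      (\<forall>j. 1 \<le> j \<and> j < sum_list \<beta> \<and> j \<in> Sset \<beta> \<longrightarrow> w ! (j - 1) < w ! j)"
      by (simp add: ascent_def w_def)
    also have "\<dots> \<longleftrightarrow> w \<in> ?S"
      unfolding mem_Collect_eq using pos mono w(2,3) by (intro iffI conjI; simp)
    finally show ?thesis by (rule sym)
  qed
  ultimately show ?thesis
    unfolding Lcoeff_def w_def[symmetric] by (simp add: card_subset_singleton)
qed

section \<open>Increasing maps and i-extensions\<close>

definition incr_maps :: "nat \<Rightarrow> nat \<Rightarrow> (nat \<Rightarrow> nat) set" where
  "incr_maps n N = {t \<in> {1..n-1} \<rightarrow>\<^sub>E {1..N-1}. strict_mono_on {1..n-1} t}"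

lemma incr_maps_range: "t \<in> incr_maps n N \<Longrightarrow> j \<in> {1..n-1} \<Longrightarrow> t j \<in> {1..N-1}"
  by (auto simp: incr_maps_def)

lemma incr_maps_extensional: "t \<in> incr_maps n N \<Longrightarrow> t \<in> extensional {1..n-1}"
  by (simp add: incr_maps_def PiE_iff)

lemma finite_incr_maps: "finite (incr_maps n N)"
  by (rule finite_subset[of _ "{1..n-1} \<rightarrow>\<^sub>E {1..N-1}"]) (auto simp: incr_maps_def finite_PiE)

definition reflect_map :: "nat \<Rightarrow> nat \<Rightarrow> (nat \<Rightarrow> nat) \<Rightarrow> nat \<Rightarrow> nat" where
  "reflect_map n N t = restrict (\<lambda>j. N - t (n - j)) {1..n-1}"

lemma reflect_map_apply: "j \<in> {1..n-1} \<Longrightarrow> reflect_map n N t j = N - t (n - j)"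
  by (simp add: reflect_map_def)

lemma reflect_map_in_incr_maps:
  assumes "t \<in> incr_maps n N"
  shows "reflect_map n N t \<in> incr_maps n N"
proof -
  have mono: "strict_mono_on {1..n-1} t"
    using assms by (simp add: incr_maps_def)
  have "N - t (n - j) \<in> {1..N-1}" if "j \<in> {1..n-1}" for j
  proof -
    have "n - j \<in> {1..n-1}"
      using that by auto
    from incr_maps_range[OF assms this] show ?thesis
      by auto
  qed
  moreover have "N - t (n - a) < N - t (n - b)" if "a \<in> {1..n-1}" "b \<in> {1..n-1}" "a < b" for a b
  proof -
    have ab: "n - a \<in> {1..n-1}" "n - b \<in> {1..n-1}" "n - b < n - a"
      using that by auto
    then have "t (n - b) < t (n - a)"
      using strict_mono_onD[OF mono] by blast
    with incr_maps_range[OF assms ab(1)] show ?thesis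
      by auto
  qed
  ultimately show ?thesis
    by (auto simp: incr_maps_def reflect_map_def intro: strict_mono_onI)
qed

lemma reflect_map_reflect_map:
  assumes "t \<in> incr_maps n N"
  shows "reflect_map n N (reflect_map n N t) = t"
proof
  fix j
  show "reflect_map n N (reflect_map n N t) j = t j"
  proof (cases "j \<in> {1..n-1}")
    case True
    then have "n - j \<in> {1..n-1}" and "n - (n - j) = j"
      by auto
    moreover have "t j \<le> N"
      using incr_maps_range[OF assms True] by auto
    ultimately show ?thesis
      using True by (simp add: reflect_map_apply)
  next
    case False
    then show ?thesis
      using extensional_arb[OF incr_maps_extensional[OF assms] False]
      by (simp only: reflect_map_def restrict_apply if_False)
  qed
qed

lemma card_incr_maps_reflect:
  assumes "A \<subseteq> {1..n-1}"
  shows "card {p \<in> incr_maps n N. \<forall>j\<in>A. Q (p j)} = card {t \<in> incr_maps n N. \<forall>j\<in>A. Q (N - t (n - j))}"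
proof (rule bij_betw_same_card, rule bij_betw_byWitness[where f = "reflect_map n N" and f' = "reflect_map n N"])
  have "N - reflect_map n N p (n - j) = p j" if "p \<in> incr_maps n N" "j \<in> A" for p j
  proof -
    have j: "j \<in> {1..n-1}"
      using that assms by blast
    then have "n - j \<in> {1..n-1}" and "n - (n - j) = j"
      by auto
    moreover have "p j \<le> N"
      using incr_maps_range[OF that(1) j] by auto
    ultimately show ?thesis
      using j by (simp add: reflect_map_apply)
  qed
  moreover have "reflect_map n N t j = N - t (n - j)" if "j \<in> A" for t j
    using that assms by (blast intro: reflect_map_apply)
  ultimately show "reflect_map n N ` {p \<in> incr_maps n N. \<forall>j\<in>A. Q (p j)} \<subseteq> {t \<in> incr_maps n N. \<forall>j\<in>A. Q (N - t (n - j))}"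
    and "reflect_map n N ` {t \<in> incr_maps n N. \<forall>j\<in>A. Q (N - t (n - j))} \<subseteq> {p \<in> incr_maps n N. \<forall>j\<in>A. Q (p j)}"
    by (auto simp: reflect_map_in_incr_maps)
qed (auto simp: reflect_map_reflect_map)

definition extension_target :: "nat \<Rightarrow> nat \<Rightarrow> nat set \<Rightarrow> (nat \<Rightarrow> nat) \<Rightarrow> nat set" where
  "extension_target n N D t = t ` D \<union> ({1..N-1} - t ` {1..n-1})"

lemma Text_eq:
  assumes "D \<subseteq> {1..n-1}"
  shows "Text n i D E = {t \<in> incr_maps n (n + i). extension_target n (n + i) D t = E}"
proof -
  have "t ` D \<inter> ({1..n+i-1} - t ` {1..n-1}) = {}" for t
    using assms by blast
  then have "(t ` D \<subseteq> E \<and> E - t ` D = {1..n+i-1} - t ` {1..n-1}) \<longleftrightarrow>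
      extension_target n (n + i) D t = E" for t
    unfolding extension_target_def by blast
  then show ?thesis
    by (auto simp: Text_def incr_maps_def)
qed

lemma extension_target_subset:
  "t \<in> incr_maps n N \<Longrightarrow> D \<subseteq> {1..n-1} \<Longrightarrow> extension_target n N D t \<subseteq> {1..N-1}"
  by (auto simp: extension_target_def incr_maps_def)

lemma sum_card_Text:
  fixes f :: "nat set \<Rightarrow> nat"
  assumes "D \<subseteq> {1..n-1}"
  shows "(\<Sum>E\<in>Pow {1..n+i-1}. card (Text n i D E) * f E) =
    (\<Sum>t\<in>incr_maps n (n + i). f (extension_target n (n + i) D t))"
proof -
  have "(\<Sum>E\<in>Pow {1..n+i-1}. card (Text n i D E) * f E) =
      (\<Sum>E\<in>Pow {1..n+i-1}. \<Sum>t\<in>{t \<in> incr_maps n (n + i). extension_target n (n + i) D t = E}.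
         f (extension_target n (n + i) D t))"
    by (simp add: Text_eq[OF assms])
  also have "\<dots> = (\<Sum>t\<in>incr_maps n (n + i). f (extension_target n (n + i) D t))"
    using extension_target_subset[OF _ assms]
    by (intro sum.group finite_incr_maps) auto
  finally show ?thesis .
qed

lemma reflected_complement_extension_target:
  assumes t: "t \<in> incr_maps n N" and D: "D \<subseteq> {1..n-1}"
  shows "{1..N-1} - (\<lambda>s. N - s) ` extension_target n N D t = (\<lambda>k. N - t k) ` ({1..n-1} - D)"
proof -
  have range: "t ` {1..n-1} \<subseteq> {1..N-1}" and inj: "inj_on t {1..n-1}"
    using t by (auto simp: incr_maps_def strict_mono_on_imp_inj_on)
  have "{1..N-1} - extension_target n N D t = t ` ({1..n-1} - D)"
    using range inj_on_image_set_diff[OF inj _ D] by (auto simp: extension_target_def)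
  moreover have "{1..N-1} - (\<lambda>s. N - s) ` X = (\<lambda>s. N - s) ` ({1..N-1} - X)" if "X \<subseteq> {1..N-1}" for X
  proof -
    have "bij_betw (\<lambda>s. N - s) {1..N-1} {1..N-1}"
      by (rule bij_betw_byWitness[where f' = "\<lambda>s. N - s"]) auto
    then show ?thesis
      using that inj_on_image_set_diff[of "\<lambda>s. N - s" "{1..N-1}" "{1..N-1}" X]
      by (simp add: bij_betw_def)
  qed
  ultimately show ?thesis
    using extension_target_subset[OF t D] by (simp add: image_image)
qed

section \<open>Cutting a sorted word into blocks\<close>

definition cut_points :: "nat \<Rightarrow> nat \<Rightarrow> (nat \<Rightarrow> nat) \<Rightarrow> bool" where
  "cut_points n N q \<longleftrightarrow> q 0 = 0 \<and> q n = N \<and> (\<forall>j<n. q j < q (Suc j))"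

lemma cut_points_less:
  assumes "cut_points n N q" and "a < b" and "b \<le> n"
  shows "q a < q b"
  using assms(2,3)
proof (induction b)
  case (Suc b)
  then have "q b < q (Suc b)"
    using assms(1) by (simp add: cut_points_def)
  with Suc show ?case
    by (cases "a = b") auto
qed simp

lemma cut_points_le:
  assumes "cut_points n N q" and "j \<le> n"
  shows "q j \<le> N"
  using cut_points_less[OF assms(1), of j n] assms by (cases "j = n") (auto simp: cut_points_def)

lemma cut_points_restrict_in_incr_maps:
  assumes "cut_points n N q"
  shows "restrict q {1..n-1} \<in> incr_maps n N"
proof -
  have "q j \<in> {1..N-1}" if "j \<in> {1..n-1}" for j
  proof -
    have "q 0 < q j" and "q j < q n"
      using cut_points_less[OF assms] that by auto
    then show ?thesis
      using assms by (auto simp: cut_points_def)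
  qed
  moreover have "strict_mono_on {1..n-1} q"
    using cut_points_less[OF assms] by (auto intro: strict_mono_onI)
  ultimately show ?thesis
    by (auto simp: incr_maps_def strict_mono_on_def)
qed

definition extend_cuts :: "nat \<Rightarrow> nat \<Rightarrow> (nat \<Rightarrow> nat) \<Rightarrow> nat \<Rightarrow> nat" where
  "extend_cuts n N p j = (if j = 0 then 0 else if j < n then p j else N)"

lemma cut_points_extend_cuts:
  assumes p: "p \<in> incr_maps n N" and "0 < n" and "0 < N"
  shows "cut_points n N (extend_cuts n N p)"
proof -
  have "extend_cuts n N p j < extend_cuts n N p (Suc j)" if "j < n" for j
  proof (cases "Suc j < n")
    case True
    then have "Suc j \<in> {1..n-1}"
      by auto
    moreover have "p j < p (Suc j)" if "0 < j"
      using \<open>Suc j < n\<close> that p by (auto simp: incr_maps_def intro: strict_mono_onD)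
    ultimately show ?thesis
      using incr_maps_range[OF p] by (force simp: extend_cuts_def)
  next
    case False
    then have "extend_cuts n N p (Suc j) = N"
      by (simp add: extend_cuts_def)
    moreover have "p j < N" if "0 < j"
    proof -
      have "j \<in> {1..n-1}"
        using that \<open>j < n\<close> by auto
      from incr_maps_range[OF p this] show ?thesis
        by auto
    qed
    ultimately show ?thesis
      using assms(3) \<open>j < n\<close> by (simp add: extend_cuts_def)
  qed
  then show ?thesis
    using assms(2) by (simp add: cut_points_def extend_cuts_def)
qed

lemma extend_cuts_restrict:
  assumes "cut_points n N q" and "j \<le> n"
  shows "extend_cuts n N (restrict q {1..n-1}) j = q j"
  using assms by (auto simp: extend_cuts_def cut_points_def)

definition blocks :: "'a list \<Rightarrow> (nat \<Rightarrow> nat) \<Rightarrow> nat \<Rightarrow> 'a multiset list" where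
  "blocks w q n = map (\<lambda>j. mset (slice (q j) (q (Suc j)) w)) [0..<n]"

lemma length_blocks [simp]: "length (blocks w q n) = n"
  by (simp add: blocks_def)

lemma nth_blocks: "j < n \<Longrightarrow> blocks w q n ! j = mset (slice (q j) (q (Suc j)) w)"
  by (simp add: blocks_def)

lemma blocks_cong: "(\<And>j. j \<le> n \<Longrightarrow> q j = q' j) \<Longrightarrow> blocks w q n = blocks w q' n"
  by (simp add: blocks_def)

lemma
  assumes "sorted w" and "cut_points n (length w) q" and "j < n"
  shows blocks_nth_nonempty: "blocks w q n ! j \<noteq> {#}"
    and Min_blocks_nth: "Min (set_mset (blocks w q n ! j)) = w ! q j"
    and Max_blocks_nth: "Max (set_mset (blocks w q n ! j)) = w ! (q (Suc j) - 1)"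
proof -
  have "q j < q (Suc j)" and "q (Suc j) \<le> length w"
    using assms(2,3) cut_points_le[OF assms(2), of "Suc j"] by (simp_all add: cut_points_def)
  then show "blocks w q n ! j \<noteq> {#}"
    and "Min (set_mset (blocks w q n ! j)) = w ! q j"
    and "Max (set_mset (blocks w q n ! j)) = w ! (q (Suc j) - 1)"
    using assms(1,3) by (simp_all add: nth_blocks Min_set_slice Max_set_slice length_slice flip: length_greater_0_conv)
qed

definition prefix_size :: "'a multiset list \<Rightarrow> nat \<Rightarrow> nat" where
  "prefix_size \<sigma> j = (\<Sum>s\<leftarrow>take j \<sigma>. size s)"

lemma prefix_size_blocks:
  assumes "cut_points n (length w) q" and "j \<le> n"
  shows "prefix_size (blocks w q n) j = q j"
proof -
  have "prefix_size (blocks w q n) j = (\<Sum>k\<leftarrow>[0..<j]. length (slice (q k) (q (Suc k)) w))"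
    using assms(2) by (simp add: prefix_size_def blocks_def take_map comp_def)
  also have "\<dots> = (\<Sum>k\<leftarrow>[0..<j]. q (Suc k) - q k)"
    using assms cut_points_le[OF assms(1), of "Suc _"]
    by (intro arg_cong[where f = sum_list] map_cong) (auto simp: length_slice)
  also have "\<dots> = q j"
    using telescope_sum_list_nat[of j q] assms by (simp add: cut_points_def less_imp_le)
  finally show ?thesis .
qed

lemma sum_list_blocks:
  assumes "cut_points n (length w) q"
  shows "sum_list (blocks w q n) = mset w"
proof -
  have "sum_list (blocks w q n) = mset (concat (map (\<lambda>j. slice (q j) (q (Suc j)) w) [0..<n]))"
    by (simp add: blocks_def mset_concat map_map comp_def)
  also have "\<dots> = mset w"
    using assms by (subst concat_slices) (auto simp: cut_points_def less_imp_le)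
  finally show ?thesis .
qed

section \<open>Coefficients of hat L_\<alpha>\<close>

definition hatL_seqs :: "nat list \<Rightarrow> nat multiset \<Rightarrow> nat multiset list set" where
  "hatL_seqs \<alpha> M = {\<sigma> :: nat multiset list.
     length \<sigma> = sum_list \<alpha> \<and>
     (\<forall>s \<in> set \<sigma>. s \<noteq> {#} \<and> (\<forall>x \<in># s. 0 < x)) \<and>
     (\<forall>j. 1 \<le> j \<and> j < sum_list \<alpha> \<longrightarrow>
        Max (set_mset (\<sigma> ! (j-1))) \<le> Min (set_mset (\<sigma> ! j)) \<and>
        (j \<in> Sset \<alpha> \<longrightarrow> Max (set_mset (\<sigma> ! (j-1))) < Min (set_mset (\<sigma> ! j)))) \<and>
     sum_list \<sigma> = M}"

lemma hatLcoeff_eq_card: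
  "hatLcoeff \<alpha> i M = (if size M = sum_list \<alpha> + i then card (hatL_seqs \<alpha> M) else 0)"
  by (simp add: hatLcoeff_def hatL_seqs_def)

lemma cut_points_prefix_size:
  assumes "\<sigma> \<in> hatL_seqs \<alpha> M"
  shows "cut_points (sum_list \<alpha>) (size M) (prefix_size \<sigma>)"
proof -
  have len: "length \<sigma> = sum_list \<alpha>" and ne: "\<forall>s\<in>set \<sigma>. s \<noteq> {#}" and sum: "sum_list \<sigma> = M"
    using assms by (auto simp: hatL_seqs_def)
  have "prefix_size \<sigma> (Suc j) = prefix_size \<sigma> j + size (\<sigma> ! j)" if "j < length \<sigma>" for j
    using that by (simp add: prefix_size_def take_Suc_conv_app_nth)
  moreover have "0 < size (\<sigma> ! j)" if "j < length \<sigma>" for j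
    using that ne by (simp add: nonempty_has_size)
  moreover have "prefix_size \<sigma> (length \<sigma>) = size M"
    using sum by (induction \<sigma> arbitrary: M) (auto simp: prefix_size_def)
  ultimately show ?thesis
    using len by (simp add: cut_points_def prefix_size_def)
qed

lemma blocks_prefix_size:
  assumes "\<sigma> \<in> hatL_seqs \<alpha> M"
  shows "blocks (sorted_list_of_multiset M) (prefix_size \<sigma>) (sum_list \<alpha>) = \<sigma>"
proof -
  define ls where "ls = map sorted_list_of_multiset \<sigma>"
  have len: "length \<sigma> = sum_list \<alpha>" and ne: "\<forall>s\<in>set \<sigma>. s \<noteq> {#}" and sum: "sum_list \<sigma> = M"
    and weak: "\<And>j. 1 \<le> j \<Longrightarrow> j < sum_list \<alpha> \<Longrightarrow> Max (set_mset (\<sigma> ! (j-1))) \<le> Min (set_mset (\<sigma> ! j))"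
    using assms by (auto simp: hatL_seqs_def)
  have "sorted (concat ls)"
  proof (rule sorted_concat)
    show "\<forall>xs\<in>set ls. sorted xs \<and> xs \<noteq> []"
      using ne by (auto simp: ls_def) (metis mset_sorted_list_of_multiset mset.simps(1))
    show "\<forall>j. Suc j < length ls \<longrightarrow> (\<forall>x\<in>set (ls ! j). \<forall>y\<in>set (ls ! Suc j). x \<le> y)"
    proof (intro allI impI ballI)
      fix j x y assume j: "Suc j < length ls" and "x \<in> set (ls ! j)" "y \<in> set (ls ! Suc j)"
      then have "x \<in># \<sigma> ! j" and "y \<in># \<sigma> ! Suc j"
        by (simp_all add: ls_def)
      then have "x \<le> Max (set_mset (\<sigma> ! j))" and "Min (set_mset (\<sigma> ! Suc j)) \<le> y"
        by simp_all
      moreover have "Max (set_mset (\<sigma> ! j)) \<le> Min (set_mset (\<sigma> ! Suc j))"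
        using weak[of "Suc j"] j len by (simp add: ls_def)
      ultimately show "x \<le> y"
        by linarith
    qed
  qed
  moreover have "mset (concat ls) = M"
    using sum by (simp add: mset_concat ls_def map_map comp_def)
  ultimately have w: "sorted_list_of_multiset M = concat ls"
    by (metis sorted_list_of_multiset_mset sorted_sort_id)
  have "prefix_size \<sigma> k = (\<Sum>xs\<leftarrow>take k ls. length xs)" for k
    by (simp add: prefix_size_def ls_def take_map comp_def flip: size_mset)
  then have "blocks (concat ls) (prefix_size \<sigma>) (length ls) ! j = mset (ls ! j)" if "j < length ls" for j
    using that by (simp add: nth_blocks slice_concat_nth)
  then show ?thesis
    using len w by (intro nth_equalityI) (simp_all add: ls_def)
qed

lemma blocks_in_hatL_seqs_iff:
  assumes w: "sorted w" "\<forall>x\<in>set w. 0 < x" and q: "cut_points (sum_list \<alpha>) (length w) q"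
  shows "blocks w q (sum_list \<alpha>) \<in> hatL_seqs \<alpha> (mset w) \<longleftrightarrow>
    (\<forall>j. 1 \<le> j \<and> j < sum_list \<alpha> \<and> j \<in> Sset \<alpha> \<longrightarrow> ascent w (q j))"
proof -
  let ?n = "sum_list \<alpha>" and ?b = "blocks w q (sum_list \<alpha>)"
  have "\<forall>s\<in>set ?b. s \<noteq> {#} \<and> (\<forall>x\<in>#s. 0 < x)"
    using blocks_nth_nonempty[OF w(1) q] set_slice_subset w(2)
    by (fastforce simp: in_set_conv_nth nth_blocks)
  moreover have boundary: "Max (set_mset (?b ! (j-1))) = w ! (q j - 1)" "Min (set_mset (?b ! j)) = w ! q j"
    if "1 \<le> j" "j < ?n" for j
    using Max_blocks_nth[OF w(1) q, of "j - 1"] Min_blocks_nth[OF w(1) q, of j] that by simp_all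
  moreover have "w ! (q j - 1) \<le> w ! q j" if "1 \<le> j" "j < ?n" for j
    using sorted_nth_mono[OF w(1), of "q j - 1" "q j"] cut_points_less[OF q, of j ?n] q that
    by (simp add: cut_points_def)
  ultimately show ?thesis
    using sum_list_blocks[OF q] by (simp add: hatL_seqs_def ascent_def) blast
qed

lemma blocks_restrict_prefix_size:
  assumes "\<sigma> \<in> hatL_seqs \<alpha> M"
  shows "blocks (sorted_list_of_multiset M)
      (extend_cuts (sum_list \<alpha>) (size M) (restrict (prefix_size \<sigma>) {1..sum_list \<alpha> - 1})) (sum_list \<alpha>) = \<sigma>"
proof -
  have "blocks (sorted_list_of_multiset M)
      (extend_cuts (sum_list \<alpha>) (size M) (restrict (prefix_size \<sigma>) {1..sum_list \<alpha> - 1})) (sum_list \<alpha>) =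
    blocks (sorted_list_of_multiset M) (prefix_size \<sigma>) (sum_list \<alpha>)"
    using extend_cuts_restrict[OF cut_points_prefix_size[OF assms]] by (rule blocks_cong)
  also have "\<dots> = \<sigma>"
    using assms by (rule blocks_prefix_size)
  finally show ?thesis .
qed

lemma restrict_prefix_size_blocks:
  assumes p: "p \<in> incr_maps n (length w)" and n: "0 < n" and w: "0 < length w"
  shows "restrict (prefix_size (blocks w (extend_cuts n (length w) p) n)) {1..n-1} = p"
proof -
  have "prefix_size (blocks w (extend_cuts n (length w) p) n) j = p j" if "j \<in> {1..n-1}" for j
  proof -
    have "0 < j" "j < n"
      using that by auto
    then show ?thesis
      using prefix_size_blocks[OF cut_points_extend_cuts[OF p n w], of j] by (simp add: extend_cuts_def)
  qed
  then have "restrict (prefix_size (blocks w (extend_cuts n (length w) p) n)) {1..n-1} = restrict p {1..n-1}"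
    by (rule restrict_ext)
  also have "\<dots> = p"
    using incr_maps_extensional[OF p] by (rule extensional_restrict)
  finally show ?thesis .
qed

lemma card_hatL_seqs:
  assumes comp: "is_composition \<alpha>" and "\<alpha> \<noteq> []" and pos: "\<forall>x\<in>#M. 0 < x"
    and size: "sum_list \<alpha> \<le> size M"
  shows "card (hatL_seqs \<alpha> M) =
    card {p \<in> incr_maps (sum_list \<alpha>) (size M). \<forall>j\<in>Sset \<alpha>. ascent (sorted_list_of_multiset M) (p j)}"
proof -
  define n N w where "n = sum_list \<alpha>" and "N = size M" and "w = sorted_list_of_multiset M"
  define P where "P = {p \<in> incr_maps n N. \<forall>j\<in>Sset \<alpha>. ascent w (p j)}"
  obtain a where "a \<in> set \<alpha>"
    using \<open>\<alpha> \<noteq> []\<close> by (cases \<alpha>) auto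
  then have n: "0 < n"
    using comp member_le_sum_list[of a \<alpha>] by (auto simp: is_composition_def n_def)
  then have N: "0 < N"
    using size by (simp add: n_def N_def)
  have w: "sorted w" "\<forall>x\<in>set w. 0 < x" "mset w = M" "length w = N"
    using pos by (simp_all add: w_def N_def flip: size_mset)
  have S: "Sset \<alpha> \<subseteq> {1..n-1}"
    using Sset_subset[OF comp] by (simp add: n_def)
  have blocks_mem: "blocks w q n \<in> hatL_seqs \<alpha> M \<longleftrightarrow> (\<forall>j\<in>Sset \<alpha>. ascent w (q j))"
    if "cut_points n N q" for q
    using blocks_in_hatL_seqs_iff[OF w(1,2), of \<alpha> q] that all_in_range_iff_ball[OF S] w(3,4)
    by (simp add: n_def)
  have "bij_betw (\<lambda>\<sigma>. restrict (prefix_size \<sigma>) {1..n-1}) (hatL_seqs \<alpha> M) P"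
  proof (rule bij_betw_byWitness[where f' = "\<lambda>p. blocks w (extend_cuts n N p) n"])
    show "\<forall>\<sigma>\<in>hatL_seqs \<alpha> M. blocks w (extend_cuts n N (restrict (prefix_size \<sigma>) {1..n-1})) n = \<sigma>"
      using blocks_restrict_prefix_size by (simp add: n_def N_def w_def)
    show "\<forall>p\<in>P. restrict (prefix_size (blocks w (extend_cuts n N p) n)) {1..n-1} = p"
      using restrict_prefix_size_blocks[of _ n w] n N w(4) by (simp add: P_def)
    show "(\<lambda>\<sigma>. restrict (prefix_size \<sigma>) {1..n-1}) ` hatL_seqs \<alpha> M \<subseteq> P"
    proof clarify
      fix \<sigma> assume \<sigma>: "\<sigma> \<in> hatL_seqs \<alpha> M"
      then have q: "cut_points n N (prefix_size \<sigma>)"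
        using cut_points_prefix_size by (simp add: n_def N_def)
      have "blocks w (prefix_size \<sigma>) n \<in> hatL_seqs \<alpha> M"
        using blocks_prefix_size[OF \<sigma>] \<sigma> by (simp add: n_def w_def)
      then show "restrict (prefix_size \<sigma>) {1..n-1} \<in> P"
        using blocks_mem[OF q] S cut_points_restrict_in_incr_maps[OF q] by (auto simp: P_def)
    qed
    show "(\<lambda>p. blocks w (extend_cuts n N p) n) ` P \<subseteq> hatL_seqs \<alpha> M"
    proof clarify
      fix p assume "p \<in> P"
      then have "p \<in> incr_maps n N" and "\<forall>j\<in>Sset \<alpha>. ascent w (extend_cuts n N p j)"
        using S by (auto simp: P_def extend_cuts_def)
      then show "blocks w (extend_cuts n N p) n \<in> hatL_seqs \<alpha> M"
        using blocks_mem cut_points_extend_cuts n N by blast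
    qed
  qed
  then show ?thesis
    by (simp add: bij_betw_same_card P_def n_def N_def w_def)
qed

lemma sum_Text_Lcoeff:
  assumes comp: "is_composition \<alpha>" and pos: "\<forall>x\<in>#M. 0 < x" and size: "size M = sum_list \<alpha> + i"
  shows "(\<Sum>E \<in> Pow {1..sum_list \<alpha> + i - 1}.
      card (Text (sum_list \<alpha>) i (Sset (omega \<alpha>)) E) * Lcoeff (omega (Ccomp (sum_list \<alpha> + i) E)) M) =
    card {t \<in> incr_maps (sum_list \<alpha>) (size M).
      \<forall>j\<in>Sset \<alpha>. ascent (sorted_list_of_multiset M) (size M - t (sum_list \<alpha> - j))}"
proof -
  define n N w where "n = sum_list \<alpha>" and "N = size M" and "w = sorted_list_of_multiset M"
  define D where "D = Sset (omega \<alpha>)"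
  have S: "Sset \<alpha> \<subseteq> {1..n-1}"
    using Sset_subset[OF comp] by (simp add: n_def)
  have D_sub: "D \<subseteq> {1..n-1}"
    by (simp add: D_def Sset_omega n_def)
  have "(\<lambda>s. n - s) ` Sset \<alpha> \<subseteq> {1..n-1}"
    using S by (auto dest!: subsetD[OF S])
  then have D_compl: "{1..n-1} - D = (\<lambda>s. n - s) ` Sset \<alpha>"
    by (auto simp: D_def Sset_omega n_def)
  have Lc: "Lcoeff (omega (Ccomp N E)) M = of_bool (\<forall>j\<in>{1..N-1} - (\<lambda>s. N - s) ` E. ascent w j)"
    if "E \<in> Pow {1..N-1}" for E
  proof -
    have E: "E \<subseteq> {1..N-1}"
      using that by simp
    then have "sum_list (omega (Ccomp N E)) = N" and "Sset (omega (Ccomp N E)) = {1..N-1} - (\<lambda>s. N - s) ` E"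
      by (simp_all add: sum_list_omega sum_list_Ccomp Sset_omega Sset_Ccomp)
    then show ?thesis
      using all_in_range_iff_ball[of "{1..N-1} - (\<lambda>s. N - s) ` E" N]
      by (simp add: Lcoeff_eq[OF pos] N_def w_def)
  qed
  have "(\<Sum>E \<in> Pow {1..n+i-1}. card (Text n i D E) * Lcoeff (omega (Ccomp N E)) M) =
      (\<Sum>E \<in> Pow {1..n+i-1}. card (Text n i D E) * of_bool (\<forall>j\<in>{1..N-1} - (\<lambda>s. N - s) ` E. ascent w j))"
    using Lc size by (simp add: n_def N_def)
  also have "\<dots> = (\<Sum>t\<in>incr_maps n N.
      of_bool (\<forall>j\<in>{1..N-1} - (\<lambda>s. N - s) ` extension_target n N D t. ascent w j))"
    using sum_card_Text[OF D_sub] size by (simp add: n_def N_def)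
  also have "\<dots> = (\<Sum>t\<in>incr_maps n N. of_bool (\<forall>j\<in>Sset \<alpha>. ascent w (N - t (n - j))))"
    using reflected_complement_extension_target[OF _ D_sub] D_compl by (simp add: image_image)
  also have "\<dots> = card {t \<in> incr_maps n N. \<forall>j\<in>Sset \<alpha>. ascent w (N - t (n - j))}"
    by (simp add: finite_incr_maps Int_def)
  finally show ?thesis
    using size by (simp add: n_def N_def w_def D_def)
qed

theorem mainTheorem3:
  fixes \<alpha> :: "nat list" and i :: nat and M :: "nat multiset"
  assumes "is_composition \<alpha>" and "\<alpha> \<noteq> []"
    and "\<forall>x \<in># M. 0 < x"
  shows "hatLcoeff \<alpha> i M =
    (\<Sum>E \<in> Pow {1..sum_list \<alpha> + i - 1}.
        card (Text (sum_list \<alpha>) i (Sset (omega \<alpha>)) E) * Lcoeff (omega (Ccomp (sum_list \<alpha> + i) E)) M)"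
proof (cases "size M = sum_list \<alpha> + i")
  case True
  then show ?thesis
    using card_hatL_seqs[OF assms] card_incr_maps_reflect[OF Sset_subset[OF assms(1)]]
      sum_Text_Lcoeff[OF assms(1,3) True]
    by (simp add: hatLcoeff_eq_card)
next
  case False
  then have "Lcoeff (omega (Ccomp (sum_list \<alpha> + i) E)) M = 0" if "E \<subseteq> {1..sum_list \<alpha> + i - 1}" for E
    using that by (simp add: Lcoeff_eq[OF assms(3)] sum_list_omega sum_list_Ccomp)
  with False show ?thesis
    by (simp add: hatLcoeff_eq_card)
qed

end
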